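(* For every integer $n\ge 1$, $$\Phi^{(3)}[a, a'; bq^n, b'; c; x, y] = \Phi^{(3)}[a, a'; b, b'; c; x, y] + \frac{bx(1-a)}{1-c} \sum_{k=1}^n q^{k-1} \Phi^{(3)}[aq, a'; bq^k, b'; cq; x, y]$$ and $$\Phi^{(3)}[a, a'; bq^{-n}, b'; c; x, y] = \Phi^{(3)}[a, a'; b, b'; c; x, y] - \frac{bx(1-a)}{1-c} \sum_{k=1}^n q^{-k} \Phi^{(3)}[aq, a'; bq^{1-k}, b'; cq; x, y].$$
   Context: Let $q$ be a complex number with $0<|q|<1$. For complex $z$ and integer $m\ge 0$, $(z;q)_m=\prod_{j=0}^{m-1}(1-zq^j)$, with $(z;q)_0=1$. The $q$-Appell function $\Phi^{(3)}$ (which has a single denominator parameter $c$) is $$\Phi^{(3)}[a, a'; b, b'; c; x, y] = \sum_{m, n \geq 0} \frac{(a; q)_m (a'; q)_n (b; q)_m (b'; q)_n}{(q; q)_m (q; q)_n (c; q)_{m+n}} x^m y^n.$$ Identities are understood as identities of power series in $x,y$ (formal, or convergent for small $|x|,|y|$), with complex parameters chosen so that no denominator occurring vanishes. *)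

theory Defs
  imports "HOL-Computational_Algebra.Formal_Power_Series"
begin

definition qpoch :: "complex \<Rightarrow> complex \<Rightarrow> nat \<Rightarrow> complex" where
  "qpoch z q m = (\<Prod>j<m. (1 - z * q ^ j))"

text \<open>The q-Appell function Phi^(3) as a formal power series in two variables x, y,
  represented as an fps in x whose coefficients are fps in y.\<close>
definition Phi3 :: "complex \<Rightarrow> complex \<Rightarrow> complex \<Rightarrow> complex \<Rightarrow> complex \<Rightarrow> complex \<Rightarrow> complex fps fps" where
  "Phi3 q a a' b b' c = Abs_fps (\<lambda>m. Abs_fps (\<lambda>n.
      qpoch a q m * qpoch a' q n * qpoch b q m * qpoch b' q n /
      (qpoch q q m * qpoch q q n * qpoch c q (m + n))))"

definition xvar :: "complex fps fps" where "xvar = fps_X"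
definition cst :: "complex \<Rightarrow> complex fps fps" where "cst t = fps_const (fps_const t)"

end

theory Submission
  imports Defs
begin

text \<open>Replacing b by bq only changes the factor (b;q)_m of the coefficient of x^m y^n, and
  (bq;q)_m - (b;q)_m = b (1 - q^m) (bq;q)_(m-1); the factor 1 - q^m cancels against (q;q)_m.
  This gives the contiguity relation
  Phi3[b q] = Phi3[b] + b(1-a)/(1-c) x Phi3[aq; bq; cq],
  and applying it along b, bq, ..., bq^n, resp. along bq^-n, ..., b, the sums telescope.\<close>

lemma qpoch_0 [simp]: "qpoch z q 0 = 1"
  by (simp add: qpoch_def)

lemma qpoch_Suc: "qpoch z q (Suc m) = qpoch z q m * (1 - z * q ^ m)"
  by (simp add: qpoch_def)

lemma qpoch_Suc_shift: "qpoch z q (Suc m) = (1 - z) * qpoch (z * q) q m"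
  unfolding qpoch_def by (subst prod.lessThan_Suc_shift) (simp add: mult.assoc)

lemma qpoch_shift_diff:
  "qpoch (z * q) q (Suc m) - qpoch z q (Suc m) = z * (1 - q ^ Suc m) * qpoch (z * q) q m"
  by (simp only: qpoch_Suc[of "z * q"] qpoch_Suc_shift[of z]) (simp add: algebra_simps)

lemma qpoch_q_q_nonzero:
  assumes "norm q < 1"
  shows "qpoch q q m \<noteq> 0"
proof -
  have "q ^ Suc j \<noteq> 1" for j
  proof
    assume "q ^ Suc j = 1"
    then have "norm q ^ Suc j = 1"
      by (metis norm_one norm_power)
    moreover have "norm q ^ Suc j < 1"
      using assms power_less_one_iff[of "norm q" "Suc j"] by simp
    ultimately show False
      by simp
  qed
  then show ?thesis
    by (simp add: qpoch_def)
qed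

lemma cst_mult: "cst (s * t) = cst s * cst t"
  by (simp add: cst_def)

lemma Phi3_nth_nth:
  "fps_nth (fps_nth (Phi3 q a a' b b' c) m) n =
     qpoch a q m * qpoch a' q n * qpoch b q m * qpoch b' q n /
     (qpoch q q m * qpoch q q n * qpoch c q (m + n))"
  by (simp add: Phi3_def)

lemma cst_xvar_mult_nth_nth:
  "fps_nth (fps_nth (cst t * xvar * F) m) n =
     (if m = 0 then 0 else t * fps_nth (fps_nth F (m - 1)) n)"
  by (simp add: cst_def xvar_def mult.assoc)

text \<open>No hypothesis on c is needed: if some (c;q)_k vanishes, division by zero makes the
  affected coefficients 0 on both sides.\<close>

lemma Phi3_contiguous_b:
  assumes qq: "\<And>k. qpoch q q k \<noteq> 0"
  shows "Phi3 q a a' (b * q) b' c =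
           Phi3 q a a' b b' c
           + cst (b * (1 - a) / (1 - c)) * xvar * Phi3 q (a * q) a' (b * q) b' (c * q)"
proof (rule fps_ext, rule fps_ext)
  fix m n
  show "fps_nth (fps_nth (Phi3 q a a' (b * q) b' c) m) n =
        fps_nth (fps_nth (Phi3 q a a' b b' c
          + cst (b * (1 - a) / (1 - c)) * xvar * Phi3 q (a * q) a' (b * q) b' (c * q)) m) n"
  proof (cases m)
    case 0
    then show ?thesis
      unfolding fps_add_nth cst_xvar_mult_nth_nth by (simp add: Phi3_nth_nth)
  next
    case (Suc l)
    have "1 - q ^ Suc l \<noteq> 0"
      using qq[of "Suc l"] by (simp add: qpoch_Suc)
    then have
      "qpoch a q (Suc l) * qpoch a' q n * (qpoch (b * q) q (Suc l) - qpoch b q (Suc l)) * qpoch b' q n /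
         (qpoch q q (Suc l) * qpoch q q n * qpoch c q (Suc l + n))
       = b * (1 - a) / (1 - c) * fps_nth (fps_nth (Phi3 q (a * q) a' (b * q) b' (c * q)) l) n"
      by (simp add: qpoch_shift_diff Phi3_nth_nth qpoch_Suc[of q q l] qpoch_Suc_shift[of a]
          qpoch_Suc_shift[of c] mult_ac)
    then show ?thesis
      unfolding fps_add_nth cst_xvar_mult_nth_nth Phi3_nth_nth[of _ _ _ "b * q"]
        Phi3_nth_nth[of _ _ _ b] Suc
      by (simp add: diff_divide_distrib algebra_simps)
  qed
qed

lemma Phi3_contiguous_b_scaled:
  assumes "\<And>k. qpoch q q k \<noteq> 0"
  shows "Phi3 q a a' (b * (s * q)) b' c =
           Phi3 q a a' (b * s) b' c
           + cst (b * (1 - a) / (1 - c)) * xvar * (cst s * Phi3 q (a * q) a' (b * (s * q)) b' (c * q))"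
proof -
  have "cst (b * s * (1 - a) / (1 - c)) = cst (b * (1 - a) / (1 - c)) * cst s"
    by (simp flip: cst_mult add: mult_ac)
  then show ?thesis
    using Phi3_contiguous_b[OF assms, of a a' "b * s" b'] by (simp add: mult_ac)
qed

lemma Phi3_iterate_contiguous_b_up:
  assumes "\<And>k. qpoch q q k \<noteq> 0"
    and r: "\<And>k. r (Suc k) = r k * q"
  shows "Phi3 q a a' (b * r n) b' c =
           Phi3 q a a' (b * r 0) b' c
           + cst (b * (1 - a) / (1 - c)) * xvar *
             (\<Sum>k=1..n. cst (r (k - 1)) * Phi3 q (a * q) a' (b * r k) b' (c * q))"
proof (induction n)
  case 0
  then show ?case by simp
next
  case (Suc n)
  then show ?case
    using Phi3_contiguous_b_scaled[OF assms(1), of a a' b "r n" b'] r[of n]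
    by (simp add: algebra_simps)
qed

lemma Phi3_iterate_contiguous_b_down:
  assumes "\<And>k. qpoch q q k \<noteq> 0"
    and r: "\<And>k. r (Suc k) * q = r k"
  shows "Phi3 q a a' (b * r n) b' c =
           Phi3 q a a' (b * r 0) b' c
           - cst (b * (1 - a) / (1 - c)) * xvar *
             (\<Sum>k=1..n. cst (r k) * Phi3 q (a * q) a' (b * r (k - 1)) b' (c * q))"
proof (induction n)
  case 0
  then show ?case by simp
next
  case (Suc n)
  then show ?case
    using Phi3_contiguous_b_scaled[OF assms(1), of a a' b "r (Suc n)" b'] r[of n]
    by (simp add: algebra_simps)
qed

theorem theorem11:
  fixes q a a' b b' c :: complex and n :: nat
  assumes "0 < norm q" and "norm q < 1"
    and "\<forall>k. qpoch c q k \<noteq> 0"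
    and "n \<ge> 1"
  shows "Phi3 q a a' (b * q ^ n) b' c =
           Phi3 q a a' b b' c
           + cst (b * (1 - a) / (1 - c)) * xvar *
             (\<Sum>k=1..n. cst (q ^ (k - 1)) * Phi3 q (a * q) a' (b * q ^ k) b' (c * q)) \<and>
         Phi3 q a a' (b * q powi (- int n)) b' c =
           Phi3 q a a' b b' c
           - cst (b * (1 - a) / (1 - c)) * xvar *
             (\<Sum>k=1..n. cst (q powi (- int k)) * Phi3 q (a * q) a' (b * q powi (1 - int k)) b' (c * q))"
proof -
  have qq: "\<And>k. qpoch q q k \<noteq> 0"
    using assms(2) by (rule qpoch_q_q_nonzero)
  have q_powi_Suc: "q powi (- int (Suc k)) * q = q powi (- int k)" for k
    using assms(1) by (simp add: power_int_diff power_int_minus field_simps)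
  have "(\<Sum>k=1..n. cst (q powi (- int k)) * Phi3 q (a * q) a' (b * q powi (- int (k - 1))) b' (c * q))
      = (\<Sum>k=1..n. cst (q powi (- int k)) * Phi3 q (a * q) a' (b * q powi (1 - int k)) b' (c * q))"
    by (rule sum.cong) (auto simp: of_nat_diff)
  then show ?thesis
    using Phi3_iterate_contiguous_b_up[OF qq, of "\<lambda>k. q ^ k" a a' b n b' c]
      Phi3_iterate_contiguous_b_down[OF qq, of "\<lambda>k. q powi (- int k)", OF q_powi_Suc, of a a' b n b' c]
    by simp
qed

end
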